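(* Let $\theta,\alpha\in(0,1)$ with $\theta$ irrational, and let $f(x)\in\mathbb Z[x]$ be a non-constant polynomial. Then the integer sequence $\boldsymbol u=\langle u_m\rangle_{m=0}^\infty$ given by $u_m:=f(\lfloor m\theta+\alpha\rfloor)$ satisfies Condition ( * ).
   Context: Condition ( * ): an integer sequence $\boldsymbol u=\langle u_m\rangle_{m\ge0}$ satisfies Condition ( * ) if there exist an integer $\sigma\ge 0$, integers $b_0,\ldots,b_\sigma$, and an unbounded sequence of positive integers $\langle r_n\rangle_{n\ge 0}$ such that, defining for each $n\in\mathbb N$ the sequence $w_{n,m}:=\sum_{i=0}^\sigma b_i u_{m+ir_n}$ ($m\ge 0$), the following hold: (1) Expanding gaps: for every $n$, the set $\Delta_n:=\{m\in\mathbb N: w_{n,m}\neq 0\}$ is infinite, and there is a constant $c>0$ (independent of $n$) such that the minimum distance $\mu_n$ between any two distinct elements of $\Delta_n$ satisfies $\mu_n\ge c\, r_n$ for all $n$. (2) Polynomial variation: there exist constants $c_0\ge 0$ and $C'>0$ (independent of $n,m,m'$) such that for all $n\in\mathbb N$ and all $m<m'$ in $\Delta_n$, $|w_{n,m'}|\le C'\big((m'-m)^{c_0}+|w_{n,m}|\big)$. *)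

theory Defs
  imports "HOL-Analysis.Analysis" "HOL-Computational_Algebra.Polynomial"
begin

definition wseq :: "(nat \<Rightarrow> int) \<Rightarrow> nat \<Rightarrow> (nat \<Rightarrow> int) \<Rightarrow> (nat \<Rightarrow> nat) \<Rightarrow> nat \<Rightarrow> nat \<Rightarrow> int" where
  "wseq u \<sigma> b r n m = (\<Sum>i = 0..\<sigma>. b i * u (m + i * r n))"

definition Delta :: "(nat \<Rightarrow> int) \<Rightarrow> nat \<Rightarrow> (nat \<Rightarrow> int) \<Rightarrow> (nat \<Rightarrow> nat) \<Rightarrow> nat \<Rightarrow> nat set" where
  "Delta u \<sigma> b r n = {m. wseq u \<sigma> b r n m \<noteq> 0}"

text \<open>Condition (*). The minimum distance mu_n between distinct elements of Delta_n
  is at least c r_n iff every pair of distinct elements has distance at least c r_n.\<close>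
definition condition_star :: "(nat \<Rightarrow> int) \<Rightarrow> bool" where
  "condition_star u \<longleftrightarrow>
    (\<exists>(\<sigma>::nat) (b::nat \<Rightarrow> int) (r::nat \<Rightarrow> nat).
       (\<forall>n. r n > 0) \<and> \<not> bdd_above (range r) \<and>
       (\<forall>n. infinite (Delta u \<sigma> b r n)) \<and>
       (\<exists>c::real. c > 0 \<and> (\<forall>n. \<forall>m\<in>Delta u \<sigma> b r n. \<forall>m'\<in>Delta u \<sigma> b r n.
            m \<noteq> m' \<longrightarrow> \<bar>real m - real m'\<bar> \<ge> c * real (r n))) \<and>
       (\<exists>(c0::real) (C'::real). c0 \<ge> 0 \<and> C' > 0 \<and>
          (\<forall>n. \<forall>m\<in>Delta u \<sigma> b r n. \<forall>m'\<in>Delta u \<sigma> b r n. m < m' \<longrightarrow>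
             real_of_int \<bar>wseq u \<sigma> b r n m'\<bar>
               \<le> C' * (real (m' - m) powr c0 + real_of_int \<bar>wseq u \<sigma> b r n m\<bar>))))"

end

theory Submission
  imports Defs "HOL-Analysis.Kronecker_Approximation_Theorem"
begin

text \<open>
  Let \<open>\<sigma> = deg f + 1\<close>, let \<open>b\<close> be the coefficients of the \<open>\<sigma>\<close>-th forward difference, and choose
  \<open>r\<^sub>n\<close> such that \<open>\<sigma> \<parallel>r\<^sub>n \<theta>\<parallel> < 1\<close> and \<open>\<sigma> \<parallel>r\<^sub>n \<theta>\<parallel> \<le> \<parallel>k \<theta>\<parallel>\<close> for all \<open>k < r\<^sub>n / (\<sigma> + 1)\<close>
  (such \<open>r\<^sub>n\<close> exist by Dirichlet's theorem). Write \<open>r\<^sub>n \<theta> = p\<^sub>n + \<epsilon>\<^sub>n\<close> with \<open>p\<^sub>n\<close> the nearest integer.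
  Then \<open>\<lfloor>(m + i r\<^sub>n) \<theta> + \<alpha>\<rfloor> = \<lfloor>m \<theta> + \<alpha>\<rfloor> + i p\<^sub>n + e\<^sub>i\<close>, where \<open>e\<^sub>i\<close> (\<open>i \<le> \<sigma>\<close>) is \<open>0\<close> up to some
  index and \<open>sgn \<epsilon>\<^sub>n\<close> from there on. The \<open>\<sigma>\<close>-th difference annihilates \<open>f\<close> along arithmetic progressions,
  so \<open>w(n, m) = 0\<close> unless the jump occurs, and then \<open>w(n, m)\<close> is a tail of the difference applied to
  \<open>f(x \<plusminus> 1) - f(x)\<close>. A jump needs the fractional part of \<open>m \<theta> + \<alpha>\<close> in a window of length \<open>\<sigma> |\<epsilon>\<^sub>n|\<close>,
  so two elements of \<open>\<Delta>\<^sub>n\<close> differ by some \<open>k\<close> with \<open>\<parallel>k \<theta>\<parallel> < \<sigma> \<parallel>r\<^sub>n \<theta>\<parallel>\<close>, i.e. \<open>k \<ge> r\<^sub>n / (\<sigma> + 1)\<close>;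
  density of \<open>m \<theta> + \<alpha>\<close> modulo 1 makes \<open>\<Delta>\<^sub>n\<close> infinite. Since the tail coefficient sums are nonzero, a
  tail sum at \<open>x\<close> is comparable to \<open>x\<^sup>k\<close> (\<open>k\<close> the degree of \<open>f(x \<plusminus> 1) - f(x)\<close>) up to terms
  polynomial in \<open>p\<^sub>n = O(m' - m)\<close>, which gives the polynomial variation.
\<close>

section \<open>Forward differences of polynomials\<close>

definition fdiff_coeff :: "nat \<Rightarrow> nat \<Rightarrow> int" where
  "fdiff_coeff n i = (-1) ^ (n - i) * int (n choose i)"

lemma fdiff_coeff_Suc_0: "fdiff_coeff (Suc n) 0 = - fdiff_coeff n 0"
  by (simp add: fdiff_coeff_def)

lemma fdiff_coeff_Suc_Suc: "fdiff_coeff (Suc n) (Suc i) = fdiff_coeff n i - fdiff_coeff n (Suc i)"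
proof (cases "i < n")
  case True
  then have "n - i = Suc (n - Suc i)" by simp
  then show ?thesis by (simp add: fdiff_coeff_def algebra_simps)
qed (simp add: fdiff_coeff_def)

lemma fdiff_coeff_eq_0: "n < i \<Longrightarrow> fdiff_coeff n i = 0"
  by (simp add: fdiff_coeff_def)

lemma fdiff_coeff_neq_0: "i \<le> n \<Longrightarrow> fdiff_coeff n i \<noteq> 0"
  by (simp add: fdiff_coeff_def)

lemma fdiff_coeff_self [simp]: "fdiff_coeff n n = 1"
  by (simp add: fdiff_coeff_def)

lemma sum_fdiff_coeff_Suc:
  fixes h :: "nat \<Rightarrow> int"
  shows "(\<Sum>i=0..Suc n. fdiff_coeff (Suc n) i * h i) = (\<Sum>i=0..n. fdiff_coeff n i * (h (Suc i) - h i))"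
proof -
  have "(\<Sum>i=0..Suc n. fdiff_coeff (Suc n) i * h i)
      = - fdiff_coeff n 0 * h 0 + (\<Sum>i=0..n. (fdiff_coeff n i - fdiff_coeff n (Suc i)) * h (Suc i))"
    by (subst sum.atLeast0_atMost_Suc_shift) (simp add: fdiff_coeff_Suc_0 fdiff_coeff_Suc_Suc)
  also have "\<dots> = (\<Sum>i=0..n. fdiff_coeff n i * h (Suc i))
      - (fdiff_coeff n 0 * h 0 + (\<Sum>i=0..n. fdiff_coeff n (Suc i) * h (Suc i)))"
    by (simp add: left_diff_distrib sum_subtractf)
  also have "fdiff_coeff n 0 * h 0 + (\<Sum>i=0..n. fdiff_coeff n (Suc i) * h (Suc i))
      = (\<Sum>i=0..Suc n. fdiff_coeff n i * h i)"
    by (subst sum.atLeast0_atMost_Suc_shift) simp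
  also have "\<dots> = (\<Sum>i=0..n. fdiff_coeff n i * h i)"
    by (simp add: fdiff_coeff_eq_0)
  finally show ?thesis
    by (simp add: right_diff_distrib sum_subtractf)
qed

lemma degree_pcompose_shift_diff_less:
  fixes g :: "'a::idom poly"
  assumes "0 < degree g"
  shows "degree (g \<circ>\<^sub>p [:c, 1:] - g) < degree g"
proof -
  let ?q = "g \<circ>\<^sub>p [:c, 1:] - g"
  have "degree (g \<circ>\<^sub>p [:c, 1:]) = degree g"
    by (simp add: degree_pcompose)
  moreover have "lead_coeff (g \<circ>\<^sub>p [:c, 1:]) = lead_coeff g"
    by (subst lead_coeff_comp) simp_all
  ultimately have "degree ?q \<le> degree g" "coeff ?q (degree g) = 0"
    by (auto intro: degree_diff_le)
  then show ?thesis
    using assms leading_coeff_0_iff[of ?q] by (cases "?q = 0") (auto simp: le_less)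
qed

lemma pcompose_shift_diff_neq_0:
  fixes f :: "'a::{idom, ring_char_0} poly"
  assumes "0 < degree f" "s \<noteq> 0"
  shows "f \<circ>\<^sub>p [:s, 1:] - f \<noteq> 0"
proof
  assume "f \<circ>\<^sub>p [:s, 1:] - f = 0"
  then have shift_eq: "f \<circ>\<^sub>p [:s, 1:] = f"
    by simp
  have periodic: "poly f (s + z) = poly f z" for z
  proof -
    have "poly f (s + z) = poly (f \<circ>\<^sub>p [:s, 1:]) z"
      by (simp add: poly_pcompose)
    with shift_eq show ?thesis
      by simp
  qed
  have "poly f (of_nat k * s) = poly f 0" for k
  proof (induction k)
    case (Suc k)
    have "poly f (of_nat (Suc k) * s) = poly f (s + of_nat k * s)"
      by (simp add: algebra_simps)
    with Suc.IH periodic show ?case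
      by simp
  qed simp
  then have "range (\<lambda>k. of_nat k * s) \<subseteq> {z. poly (f - [:poly f 0:]) z = 0}"
    by auto
  moreover have "infinite (range (\<lambda>k. of_nat k * s))"
    using assms(2) by (intro range_inj_infinite) (auto simp: inj_def)
  moreover have "f - [:poly f 0:] \<noteq> 0"
    using assms(1) by (metis degree_pCons_0 eq_iff_diff_eq_0 less_irrefl)
  ultimately show False
    using poly_roots_finite finite_subset by blast
qed

lemma sum_fdiff_coeff_poly_eq_0:
  fixes g :: "int poly"
  assumes "degree g < n"
  shows "(\<Sum>i=0..n. fdiff_coeff n i * poly g (x + int i * p)) = 0"
  using assms
proof (induction n arbitrary: g)
  case (Suc n)
  let ?g' = "g \<circ>\<^sub>p [:p, 1:] - g"
  have step: "poly g (x + int (Suc i) * p) - poly g (x + int i * p) = poly ?g' (x + int i * p)" for i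
    by (simp add: poly_pcompose algebra_simps)
  have "(\<Sum>i=0..Suc n. fdiff_coeff (Suc n) i * poly g (x + int i * p))
      = (\<Sum>i=0..n. fdiff_coeff n i * poly ?g' (x + int i * p))"
    by (simp only: sum_fdiff_coeff_Suc step)
  also have "\<dots> = 0"
  proof (cases "degree g = 0")
    case True
    then obtain c where "g = [:c:]"
      by (elim degree_eq_zeroE)
    then show ?thesis
      by (simp add: pcompose_pCons)
  next
    case False
    then show ?thesis
      using degree_pcompose_shift_diff_less[of g p] Suc by (intro Suc.IH) simp
  qed
  finally show ?case .
qed simp

lemma sum_fdiff_coeff_from:
  assumes "j \<le> n"
  shows "(\<Sum>i=Suc j..Suc n. fdiff_coeff (Suc n) i) = fdiff_coeff n j"
proof -
  have "(\<Sum>i=Suc j..Suc n. fdiff_coeff (Suc n) i) = (\<Sum>i=j..n. fdiff_coeff (Suc n) (Suc i))"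
    by (metis sum.shift_bounds_cl_Suc_ivl)
  also have "\<dots> = - (\<Sum>i=j..n. fdiff_coeff n (Suc i) - fdiff_coeff n i)"
    by (simp add: fdiff_coeff_Suc_Suc flip: sum_negf)
  also have "\<dots> = fdiff_coeff n j"
    using assms by (subst sum_Suc_diff) (auto simp: fdiff_coeff_eq_0)
  finally show ?thesis .
qed

lemma sum_fdiff_coeff_from_neq_0:
  assumes "1 \<le> j" "j \<le> n"
  shows "(\<Sum>i=j..n. fdiff_coeff n i) \<noteq> 0"
proof -
  obtain j' where j: "j = Suc j'"
    using assms(1) by (cases j) auto
  obtain n' where n: "n = Suc n'"
    using assms by (cases n) auto
  have "j' \<le> n'"
    using assms(2) unfolding j n by simp
  then show ?thesis
    unfolding j n using sum_fdiff_coeff_from fdiff_coeff_neq_0 by simp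
qed

definition tail_sum :: "int poly \<Rightarrow> (nat \<Rightarrow> int) \<Rightarrow> nat \<Rightarrow> nat \<Rightarrow> int \<Rightarrow> int \<Rightarrow> int" where
  "tail_sum F b n j x p = (\<Sum>i=j..n. b i * poly F (x + int i * p))"

lemma sum_fdiff_coeff_poly_step:
  fixes f :: "int poly"
  assumes "degree f < n" and e: "\<And>i. i \<le> n \<Longrightarrow> e i = (if j \<le> i then s else 0)"
  shows "(\<Sum>i=0..n. fdiff_coeff n i * poly f (x + int i * p + e i))
       = tail_sum (f \<circ>\<^sub>p [:s, 1:] - f) (fdiff_coeff n) n j x p"
proof -
  have "(\<Sum>i=0..n. fdiff_coeff n i * poly f (x + int i * p + e i))
      = (\<Sum>i=0..n. fdiff_coeff n i * poly f (x + int i * p))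
        + (\<Sum>i=0..n. fdiff_coeff n i * (poly f (x + int i * p + e i) - poly f (x + int i * p)))"
    by (simp add: algebra_simps flip: sum.distrib)
  also have "(\<Sum>i=0..n. fdiff_coeff n i * poly f (x + int i * p)) = 0"
    using assms(1) by (rule sum_fdiff_coeff_poly_eq_0)
  also have "(\<Sum>i=0..n. fdiff_coeff n i * (poly f (x + int i * p + e i) - poly f (x + int i * p)))
      = (\<Sum>i\<in>{0..n} \<inter> {j..}. fdiff_coeff n i * poly (f \<circ>\<^sub>p [:s, 1:] - f) (x + int i * p))"
    by (subst sum.inter_restrict) (auto intro!: sum.cong simp: e poly_pcompose algebra_simps)
  also have "{0..n} \<inter> {j..} = {j..n}"
    by auto
  finally show ?thesis
    by (simp add: tail_sum_def)
qed

section \<open>Growth of tail sums\<close>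

lemma power_add_minus_power_le:
  fixes y h :: "'a::linordered_idom"
  assumes "0 \<le> y" "0 \<le> h"
  shows "(y + h) ^ k - y ^ k \<le> of_nat k * h * (y + h) ^ (k - 1)"
proof (induction k)
  case (Suc k)
  have "(y + h) ^ Suc k - y ^ Suc k = (y + h) * ((y + h) ^ k - y ^ k) + h * y ^ k"
    by (simp add: algebra_simps)
  also have "\<dots> \<le> (y + h) * (of_nat k * h * (y + h) ^ (k - 1)) + h * (y + h) ^ k"
    using assms Suc.IH by (intro add_mono mult_left_mono power_mono) auto
  also have "\<dots> = of_nat (Suc k) * h * (y + h) ^ k"
    by (cases k) (simp_all add: algebra_simps)
  finally show ?case
    by simp
qed simp

lemma abs_poly_le:
  fixes F :: "'a::linordered_idom poly"
  assumes "0 \<le> z"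
  shows "\<bar>poly F z\<bar> \<le> (\<Sum>i\<le>degree F. \<bar>coeff F i\<bar>) * (z + 1) ^ degree F"
proof -
  have "\<bar>poly F z\<bar> \<le> (\<Sum>i\<le>degree F. \<bar>coeff F i\<bar> * \<bar>z\<bar> ^ i)"
    unfolding poly_altdef by (rule order_trans[OF sum_abs]) (simp add: abs_mult power_abs)
  also have "\<dots> \<le> (\<Sum>i\<le>degree F. \<bar>coeff F i\<bar> * (z + 1) ^ degree F)"
    using assms by (intro sum_mono mult_left_mono order_trans[OF power_mono power_increasing]) auto
  finally show ?thesis
    by (simp add: sum_distrib_right)
qed

lemma abs_poly_minus_lead_le:
  fixes F :: "'a::linordered_idom poly"
  assumes "0 \<le> z"
  shows "\<bar>poly F z - lead_coeff F * z ^ degree F\<bar> \<le> (\<Sum>i<degree F. \<bar>coeff F i\<bar>) * (z + 1) ^ (degree F - 1)"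
proof -
  have "poly F z - lead_coeff F * z ^ degree F = (\<Sum>i<degree F. coeff F i * z ^ i)"
    by (simp add: poly_altdef flip: lessThan_Suc_atMost)
  then have "\<bar>poly F z - lead_coeff F * z ^ degree F\<bar> \<le> (\<Sum>i<degree F. \<bar>coeff F i\<bar> * \<bar>z\<bar> ^ i)"
    by (simp add: order_trans[OF sum_abs] abs_mult power_abs)
  also have "\<dots> \<le> (\<Sum>i<degree F. \<bar>coeff F i\<bar> * (z + 1) ^ (degree F - 1))"
    using assms by (intro sum_mono mult_left_mono order_trans[OF power_mono power_increasing]) auto
  finally show ?thesis
    by (simp add: sum_distrib_right)
qed

lemma abs_poly_add_minus_lead_le:
  fixes F :: "'a::linordered_idom poly"
  assumes x: "0 \<le> x" and q: "0 \<le> q"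
  shows "\<bar>poly F (x + q) - lead_coeff F * x ^ degree F\<bar>
    \<le> ((\<Sum>i<degree F. \<bar>coeff F i\<bar>) + \<bar>lead_coeff F\<bar> * of_nat (degree F)) * (q + 1) * (x + q + 1) ^ (degree F - 1)"
proof -
  let ?k = "degree F" and ?R = "\<Sum>i<degree F. \<bar>coeff F i\<bar>"
  have Z: "0 \<le> (x + q + 1) ^ (?k - 1)"
    using x q by simp
  have "\<bar>poly F (x + q) - lead_coeff F * (x + q) ^ ?k\<bar> \<le> ?R * (x + q + 1) ^ (?k - 1)"
    using x q by (intro abs_poly_minus_lead_le) simp
  also have "\<dots> \<le> ?R * (q + 1) * (x + q + 1) ^ (?k - 1)"
    using q Z mult_right_mono[of 1 "q + 1" "(x + q + 1) ^ (?k - 1)"]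
    by (simp add: mult.assoc mult_left_mono sum_nonneg)
  finally have rem: "\<bar>poly F (x + q) - lead_coeff F * (x + q) ^ ?k\<bar> \<le> ?R * (q + 1) * (x + q + 1) ^ (?k - 1)" .
  have "(x + q) ^ ?k - x ^ ?k \<le> of_nat ?k * q * (x + q) ^ (?k - 1)"
    using x q by (rule power_add_minus_power_le)
  also have "\<dots> \<le> of_nat ?k * (q + 1) * (x + q + 1) ^ (?k - 1)"
    using x q by (intro mult_mono power_mono) auto
  finally have lead: "\<bar>lead_coeff F * ((x + q) ^ ?k - x ^ ?k)\<bar>
      \<le> \<bar>lead_coeff F\<bar> * of_nat ?k * (q + 1) * (x + q + 1) ^ (?k - 1)"
    using x q by (simp add: abs_mult mult_left_mono power_mono mult.assoc)
  have "\<bar>poly F (x + q) - lead_coeff F * x ^ ?k\<bar>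
      \<le> \<bar>poly F (x + q) - lead_coeff F * (x + q) ^ ?k\<bar> + \<bar>lead_coeff F * ((x + q) ^ ?k - x ^ ?k)\<bar>"
    using abs_triangle_ineq[of "poly F (x + q) - lead_coeff F * (x + q) ^ ?k" "lead_coeff F * ((x + q) ^ ?k - x ^ ?k)"]
    by (simp add: algebra_simps)
  also have "\<dots> \<le> ?R * (q + 1) * (x + q + 1) ^ (?k - 1) + \<bar>lead_coeff F\<bar> * of_nat ?k * (q + 1) * (x + q + 1) ^ (?k - 1)"
    using rem lead by (rule add_mono)
  finally show ?thesis
    by (simp add: algebra_simps)
qed

lemma power_add_le_two_power:
  fixes u v :: "'a::linordered_idom"
  assumes "0 \<le> u" "0 \<le> v"
  shows "(u + v) ^ k \<le> 2 ^ k * (u ^ k + v ^ k)"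
proof -
  have "(u + v) ^ k \<le> (2 * max u v) ^ k"
    using assms by (intro power_mono) auto
  also have "\<dots> = 2 ^ k * max u v ^ k"
    by (simp add: power_mult_distrib)
  also have "\<dots> \<le> 2 ^ k * (u ^ k + v ^ k)"
    using assms by (intro mult_left_mono) (auto simp: max_def)
  finally show ?thesis .
qed

lemma abs_tail_sum_le:
  assumes x: "0 \<le> x" and p: "0 \<le> p"
  shows "\<bar>tail_sum F b n j x p\<bar>
    \<le> (\<Sum>i\<le>n. \<bar>b i\<bar>) * (\<Sum>i\<le>degree F. \<bar>coeff F i\<bar>) * (x + int n * p + 1) ^ degree F"
proof -
  let ?B = "\<Sum>i\<le>degree F. \<bar>coeff F i\<bar>" and ?Z = "x + int n * p + 1"
  have bound: "\<bar>poly F (x + int i * p)\<bar> \<le> ?B * ?Z ^ degree F" if "i \<le> n" for i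
  proof -
    have "\<bar>poly F (x + int i * p)\<bar> \<le> ?B * (x + int i * p + 1) ^ degree F"
      using x p by (intro abs_poly_le) simp
    also have "\<dots> \<le> ?B * ?Z ^ degree F"
      using x p that by (intro mult_left_mono power_mono sum_nonneg) (auto intro: mult_right_mono)
    finally show ?thesis .
  qed
  have "\<bar>tail_sum F b n j x p\<bar> \<le> (\<Sum>i=j..n. \<bar>b i\<bar> * (?B * ?Z ^ degree F))"
    unfolding tail_sum_def
    by (rule order_trans[OF sum_abs], rule sum_mono) (simp add: abs_mult bound mult_left_mono)
  also have "\<dots> \<le> (\<Sum>i\<le>n. \<bar>b i\<bar> * (?B * ?Z ^ degree F))"
    using x p by (intro sum_mono2) (auto intro!: mult_nonneg_nonneg sum_nonneg)
  finally show ?thesis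
    by (simp add: sum_distrib_right mult.assoc)
qed

lemma abs_tail_sum_minus_lead_le:
  assumes x: "0 \<le> x" and p: "0 \<le> p"
  shows "\<bar>tail_sum F b n j x p - lead_coeff F * (\<Sum>i=j..n. b i) * x ^ degree F\<bar>
    \<le> (\<Sum>i\<le>n. \<bar>b i\<bar>) * ((\<Sum>i<degree F. \<bar>coeff F i\<bar>) + \<bar>lead_coeff F\<bar> * int (degree F))
       * (int n + 1) * (p + 1) * (x + int n * p + 1) ^ (degree F - 1)"
proof -
  let ?a = "lead_coeff F" and ?k = "degree F"
  let ?T = "((\<Sum>i<degree F. \<bar>coeff F i\<bar>) + \<bar>lead_coeff F\<bar> * int (degree F))
       * (int n + 1) * (p + 1) * (x + int n * p + 1) ^ (degree F - 1)"
  have T: "0 \<le> ?T"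
    using x p by (intro mult_nonneg_nonneg add_nonneg_nonneg sum_nonneg) auto
  have bound: "\<bar>poly F (x + int i * p) - ?a * x ^ ?k\<bar> \<le> ?T" if "i \<le> n" for i
  proof -
    have ip: "int i * p \<le> int n * p"
      using that p by (intro mult_right_mono) auto
    have q: "int i * p + 1 \<le> (int n + 1) * (p + 1)"
      using ip p by (simp add: algebra_simps)
    have "\<bar>poly F (x + int i * p) - ?a * x ^ ?k\<bar>
        \<le> ((\<Sum>i<?k. \<bar>coeff F i\<bar>) + \<bar>?a\<bar> * int ?k) * (int i * p + 1) * (x + int i * p + 1) ^ (?k - 1)"
      using x p by (intro abs_poly_add_minus_lead_le) auto
    also have "\<dots> \<le> ((\<Sum>i<?k. \<bar>coeff F i\<bar>) + \<bar>?a\<bar> * int ?k) * ((int n + 1) * (p + 1)) * (x + int n * p + 1) ^ (?k - 1)"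
      using x p ip q by (intro mult_mono power_mono mult_left_mono add_nonneg_nonneg sum_nonneg) auto
    finally show ?thesis
      by (simp add: mult.assoc)
  qed
  have "(\<Sum>i=j..n. b i * (poly F (x + int i * p) - ?a * x ^ ?k))
      = tail_sum F b n j x p - (\<Sum>i=j..n. b i) * (?a * x ^ ?k)"
    by (simp add: tail_sum_def right_diff_distrib sum_subtractf sum_distrib_right)
  moreover have "?a * (\<Sum>i=j..n. b i) * x ^ ?k = (\<Sum>i=j..n. b i) * (?a * x ^ ?k)"
    by (simp only: mult.commute mult.left_commute)
  ultimately have eq: "tail_sum F b n j x p - ?a * (\<Sum>i=j..n. b i) * x ^ ?k
      = (\<Sum>i=j..n. b i * (poly F (x + int i * p) - ?a * x ^ ?k))"
    by simp
  have "\<bar>\<Sum>i=j..n. b i * (poly F (x + int i * p) - ?a * x ^ ?k)\<bar> \<le> (\<Sum>i=j..n. \<bar>b i\<bar> * ?T)"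
  proof (rule order_trans[OF sum_abs], rule sum_mono)
    fix i
    assume "i \<in> {j..n}"
    then have "\<bar>poly F (x + int i * p) - ?a * x ^ ?k\<bar> \<le> ?T"
      by (intro bound) simp
    then show "\<bar>b i * (poly F (x + int i * p) - ?a * x ^ ?k)\<bar> \<le> \<bar>b i\<bar> * ?T"
      unfolding abs_mult by (rule mult_left_mono) simp
  qed
  also have "\<dots> \<le> (\<Sum>i\<le>n. \<bar>b i\<bar> * ?T)"
    by (rule sum_mono2) (use T in \<open>auto simp del: abs_ge_zero intro!: mult_nonneg_nonneg\<close>)
  finally show ?thesis
    unfolding eq by (simp only: sum_distrib_right mult.assoc)
qed

lemma tail_sum_lower_bound:
  assumes "F \<noteq> 0"
  obtains A where "0 \<le> A"
    "\<And>j x p. (\<Sum>i=j..n. b i) \<noteq> 0 \<Longrightarrow> 0 \<le> x \<Longrightarrow> 0 \<le> p \<Longrightarrow>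
       x ^ degree F \<le> 2 * \<bar>tail_sum F b n j x p\<bar> + A * (p + 1) ^ degree F"
proof -
  let ?a = "lead_coeff F" and ?k = "degree F"
  have lead_sum: "1 \<le> \<bar>?a * (\<Sum>i=j..n. b i)\<bar>" if "(\<Sum>i=j..n. b i) \<noteq> 0" for j
  proof -
    have "?a * (\<Sum>i=j..n. b i) \<noteq> 0"
      using assms that by simp
    then have "0 < \<bar>?a * (\<Sum>i=j..n. b i)\<bar>"
      by simp
    then show ?thesis
      by (simp only: int_one_le_iff_zero_less)
  qed
  show ?thesis
  proof (cases "?k")
    case 0
    then have tail: "tail_sum F b n j x p = ?a * (\<Sum>i=j..n. b i)" for j x p
      by (simp add: tail_sum_def poly_altdef sum_distrib_left mult.commute)
    show ?thesis
    proof (rule that[of 0])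
      fix j :: nat and x p :: int
      assume "(\<Sum>i=j..n. b i) \<noteq> 0"
      then have "1 \<le> \<bar>tail_sum F b n j x p\<bar>"
        unfolding tail by (rule lead_sum)
      then show "x ^ ?k \<le> 2 * \<bar>tail_sum F b n j x p\<bar> + 0 * (p + 1) ^ ?k"
        using 0 by simp
    qed simp
  next
    case (Suc k)
    define Ce where "Ce = (\<Sum>i\<le>n. \<bar>b i\<bar>) * ((\<Sum>i<?k. \<bar>coeff F i\<bar>) + \<bar>?a\<bar> * int ?k) * (int n + 1)"
    define A0 where "A0 = 2 * Ce * 2 ^ k + int n + 1"
    have Ce: "0 \<le> Ce"
      unfolding Ce_def by (intro mult_nonneg_nonneg add_nonneg_nonneg sum_nonneg) auto
    then have A0: "1 \<le> A0"
      unfolding A0_def by simp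
    show ?thesis
    proof (rule that[of "A0 ^ ?k"])
      fix j :: nat and x p :: int
      assume sum: "(\<Sum>i=j..n. b i) \<noteq> 0" and x: "0 \<le> x" and p: "0 \<le> p"
      show "x ^ ?k \<le> 2 * \<bar>tail_sum F b n j x p\<bar> + A0 ^ ?k * (p + 1) ^ ?k"
      proof (cases "A0 * (p + 1) \<le> x")
        case True
        have "(int n + 1) * (p + 1) \<le> A0 * (p + 1)"
          using p Ce unfolding A0_def by (intro mult_right_mono) auto
        then have "x + int n * p + 1 \<le> 2 * x"
          using True p by (simp add: algebra_simps)
        then have "(x + int n * p + 1) ^ k \<le> (2 * x) ^ k"
          using x p by (intro power_mono) auto
        then have "2 * Ce * (p + 1) * (x + int n * p + 1) ^ k \<le> 2 * Ce * (p + 1) * (2 ^ k * x ^ k)"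
          using Ce p by (intro mult_left_mono) (auto simp: power_mult_distrib)
        also have "\<dots> = 2 * Ce * 2 ^ k * (p + 1) * x ^ k"
          by (simp only: mult_ac)
        also have "\<dots> \<le> A0 * (p + 1) * x ^ k"
          using x p unfolding A0_def by (intro mult_right_mono) auto
        also have "\<dots> \<le> x * x ^ k"
          using True x by (intro mult_right_mono) auto
        finally have small: "2 * (Ce * (p + 1) * (x + int n * p + 1) ^ k) \<le> x ^ ?k"
          using Suc by (simp add: mult.assoc)
        have "x ^ ?k \<le> \<bar>?a * (\<Sum>i=j..n. b i) * x ^ ?k\<bar>"
          using lead_sum[OF sum] x by (simp add: abs_mult mult_le_cancel_right1)
        also have "\<dots> \<le> \<bar>tail_sum F b n j x p\<bar> + Ce * (p + 1) * (x + int n * p + 1) ^ k"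
          using abs_tail_sum_minus_lead_le[OF x p, of F b n j] Suc unfolding Ce_def
          by (simp add: mult.assoc)
        finally have "x ^ ?k \<le> \<bar>tail_sum F b n j x p\<bar> + Ce * (p + 1) * (x + int n * p + 1) ^ k" .
        moreover have "0 \<le> A0 ^ ?k * (p + 1) ^ ?k"
          using A0 p by simp
        ultimately show ?thesis
          using small by linarith
      next
        case False
        then have "x ^ ?k \<le> (A0 * (p + 1)) ^ ?k"
          using x by (intro power_mono) auto
        then show ?thesis
          by (simp add: power_mult_distrib)
      qed
    qed (use A0 in simp)
  qed
qed

lemma tail_sum_variation:
  assumes "F \<noteq> 0" "0 \<le> E"
  obtains C where "0 < C"
    "\<And>j j' x x' p D. (\<Sum>i=j..n. b i) \<noteq> 0 \<Longrightarrow> 0 \<le> x \<Longrightarrow> x \<le> x' \<Longrightarrow> x' \<le> x + E * D \<Longrightarrow>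
       0 \<le> p \<Longrightarrow> p \<le> E * D \<Longrightarrow> 1 \<le> D \<Longrightarrow>
       \<bar>tail_sum F b n j' x' p\<bar> \<le> C * (D ^ degree F + \<bar>tail_sum F b n j x p\<bar>)"
proof -
  let ?k = "degree F"
  obtain A where A: "0 \<le> A"
    and lower: "\<And>j x p. (\<Sum>i=j..n. b i) \<noteq> 0 \<Longrightarrow> 0 \<le> x \<Longrightarrow> 0 \<le> p \<Longrightarrow>
       x ^ ?k \<le> 2 * \<bar>tail_sum F b n j x p\<bar> + A * (p + 1) ^ ?k"
    using tail_sum_lower_bound[OF assms(1)] by blast
  define Cu where "Cu = (\<Sum>i\<le>n. \<bar>b i\<bar>) * (\<Sum>i\<le>?k. \<bar>coeff F i\<bar>)"
  define G where "G = E + int n * E + 1"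
  define C where "C = Cu * 2 ^ ?k * (2 + A * (E + 1) ^ ?k + G ^ ?k) + 1"
  have Cu: "0 \<le> Cu"
    unfolding Cu_def by (intro mult_nonneg_nonneg sum_nonneg) auto
  have G: "0 \<le> G"
    unfolding G_def using assms(2) by simp
  have C': "0 \<le> Cu * 2 ^ ?k * (2 + A * (E + 1) ^ ?k + G ^ ?k)"
    using Cu A G assms(2) by simp
  show ?thesis
  proof (rule that[of C])
    fix j j' :: nat and x x' p D :: int
    assume sum: "(\<Sum>i=j..n. b i) \<noteq> 0" and x: "0 \<le> x" "x \<le> x'" "x' \<le> x + E * D"
      and p: "0 \<le> p" "p \<le> E * D" and D: "1 \<le> D"
    let ?W = "\<bar>tail_sum F b n j x p\<bar>"
    have "int n * p \<le> int n * (E * D)"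
      using p by (intro mult_left_mono) auto
    then have "x' + int n * p + 1 \<le> x + G * D"
      using x D unfolding G_def by (simp add: algebra_simps)
    then have "(x' + int n * p + 1) ^ ?k \<le> (x + G * D) ^ ?k"
      using x p by (intro power_mono) auto
    also have "\<dots> \<le> 2 ^ ?k * (x ^ ?k + G ^ ?k * D ^ ?k)"
      using power_add_le_two_power[of x "G * D" ?k] x G D by (simp add: power_mult_distrib)
    finally have upper: "\<bar>tail_sum F b n j' x' p\<bar> \<le> Cu * 2 ^ ?k * (x ^ ?k + G ^ ?k * D ^ ?k)"
      using abs_tail_sum_le[of x' p F b n j'] x p Cu unfolding Cu_def
      by (smt (verit) mult.assoc mult_left_mono)
    have "p + 1 \<le> (E + 1) * D"
      using p D by (simp add: algebra_simps)
    then have "A * (p + 1) ^ ?k \<le> A * (E + 1) ^ ?k * D ^ ?k"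
      using A p by (simp add: mult.assoc mult_left_mono power_mono flip: power_mult_distrib)
    with lower[OF sum x(1) p(1)]
    have "x ^ ?k + G ^ ?k * D ^ ?k \<le> 2 * ?W + (A * (E + 1) ^ ?k + G ^ ?k) * D ^ ?k"
      by (simp add: algebra_simps)
    also have "\<dots> \<le> (2 + A * (E + 1) ^ ?k + G ^ ?k) * (D ^ ?k + ?W)"
      using A G D assms(2) by (simp add: algebra_simps)
    finally have "Cu * 2 ^ ?k * (x ^ ?k + G ^ ?k * D ^ ?k)
        \<le> Cu * 2 ^ ?k * (2 + A * (E + 1) ^ ?k + G ^ ?k) * (D ^ ?k + ?W)"
      using Cu by (simp add: mult.assoc mult_left_mono)
    also have "\<dots> \<le> C * (D ^ ?k + ?W)"
      unfolding C_def using D by (simp add: algebra_simps)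
    finally show "\<bar>tail_sum F b n j' x' p\<bar> \<le> C * (D ^ ?k + ?W)"
      using upper by linarith
  qed (use C' in \<open>simp add: C_def\<close>)
qed

section \<open>Good approximations of an irrational number\<close>

definition dist_int :: "real \<Rightarrow> real" where
  "dist_int x = \<bar>x - of_int (round x)\<bar>"

lemma dist_int_le: "dist_int x \<le> \<bar>x - of_int z\<bar>"
  unfolding dist_int_def by (rule round_diff_minimal)

lemma dist_int_mult_pos:
  assumes "\<theta> \<notin> \<rat>" "0 < k"
  shows "0 < dist_int (real k * \<theta>)"
proof (rule ccontr)
  assume "\<not> ?thesis"
  then have "\<theta> = of_int (round (real k * \<theta>)) / real k"
    using assms(2) by (simp add: dist_int_def field_simps)
  then have "\<theta> \<in> \<rat>"
    by (metis Rats_divide Rats_of_int Rats_of_nat)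
  with assms(1) show False ..
qed

definition min_dist_int :: "real \<Rightarrow> nat \<Rightarrow> real" where
  "min_dist_int \<theta> Q = Min ((\<lambda>k. dist_int (real k * \<theta>)) ` {1..Q})"

lemma min_dist_int_le: "1 \<le> k \<Longrightarrow> k \<le> Q \<Longrightarrow> min_dist_int \<theta> Q \<le> dist_int (real k * \<theta>)"
  unfolding min_dist_int_def by (rule Min_le) auto

lemma min_dist_int_attained:
  assumes "1 \<le> Q"
  obtains r where "1 \<le> r" "r \<le> Q" "min_dist_int \<theta> Q = dist_int (real r * \<theta>)"
proof -
  have "min_dist_int \<theta> Q \<in> (\<lambda>k. dist_int (real k * \<theta>)) ` {1..Q}"
    unfolding min_dist_int_def using assms by (intro Min_in) auto
  with that show ?thesis
    by auto
qed

lemma min_dist_int_pos: "\<theta> \<notin> \<rat> \<Longrightarrow> 1 \<le> Q \<Longrightarrow> 0 < min_dist_int \<theta> Q"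
  by (metis min_dist_int_attained dist_int_mult_pos not_one_le_zero neq0_conv)

lemma min_dist_int_less:
  assumes "1 \<le> Q"
  shows "min_dist_int \<theta> Q < 1 / real Q"
proof -
  from assms have "0 < Q"
    by simp
  then obtain h k where hk: "0 < k" "k \<le> int Q" "\<bar>of_int k * \<theta> - of_int h\<bar> < 1 / real Q"
    by (rule Dirichlet_approx)
  have "min_dist_int \<theta> Q \<le> dist_int (real (nat k) * \<theta>)"
    using hk by (intro min_dist_int_le) auto
  also have "\<dots> \<le> \<bar>of_int k * \<theta> - of_int h\<bar>"
    using dist_int_le hk(1) by simp
  finally show ?thesis
    using hk by simp
qed

text \<open>If the minimum never dropped by the factor \<open>K\<close>, Dirichlet's bound would give
  \<open>min_dist_int \<theta> Q0 \<le> K ^ j / (Q0 * (K + 1) ^ j)\<close> for all \<open>j\<close>, contradicting positivity.\<close>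
lemma min_dist_int_drops:
  assumes irr: "\<theta> \<notin> \<rat>" and K: "1 \<le> K" and Q0: "1 \<le> Q0"
  obtains Q where "Q0 \<le> Q" "real K * min_dist_int \<theta> Q \<le> min_dist_int \<theta> (Q div (K + 1))"
proof (rule ccontr)
  assume "\<not> thesis"
  note drop = that
  have no_drop: "min_dist_int \<theta> (Q div (K + 1)) < real K * min_dist_int \<theta> Q" if "Q0 \<le> Q" for Q
    using drop[OF that] \<open>\<not> thesis\<close> by (meson not_le)
  have decay: "min_dist_int \<theta> Q0 \<le> real K ^ j * min_dist_int \<theta> (Q0 * (K + 1) ^ j)" for j
  proof (induction j)
    case (Suc j)
    have split: "Q0 * (K + 1) ^ Suc j = Q0 * (K + 1) ^ j * (K + 1)"
      by (simp only: power_Suc2 mult.assoc)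
    have "Q0 * (K + 1) ^ Suc j div (K + 1) = Q0 * (K + 1) ^ j"
      unfolding split by (rule nonzero_mult_div_cancel_right) simp
    moreover have "Q0 \<le> Q0 * (K + 1) ^ Suc j"
      using one_le_power[of "K + 1" "Suc j"] by (metis mult.right_neutral mult_le_mono2 le_add2)
    ultimately have "min_dist_int \<theta> (Q0 * (K + 1) ^ j) < real K * min_dist_int \<theta> (Q0 * (K + 1) ^ Suc j)"
      using no_drop by metis
    then have "real K ^ j * min_dist_int \<theta> (Q0 * (K + 1) ^ j)
        \<le> real K ^ j * (real K * min_dist_int \<theta> (Q0 * (K + 1) ^ Suc j))"
      by (intro mult_left_mono) auto
    also have "\<dots> = real K ^ Suc j * min_dist_int \<theta> (Q0 * (K + 1) ^ Suc j)"
      by (simp only: power_Suc2 mult.assoc)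
    finally show ?case
      using Suc.IH by linarith
  qed simp
  have pos: "0 < min_dist_int \<theta> Q0"
    using min_dist_int_pos irr Q0 by blast
  obtain j where j: "(real K / real (K + 1)) ^ j < min_dist_int \<theta> Q0"
    using real_arch_pow_inv[OF pos, of "real K / real (K + 1)"] K by auto
  have "min_dist_int \<theta> Q0 \<le> real K ^ j * min_dist_int \<theta> (Q0 * (K + 1) ^ j)"
    by (rule decay)
  also have "\<dots> \<le> real K ^ j * (1 / real (Q0 * (K + 1) ^ j))"
    using min_dist_int_less[of "Q0 * (K + 1) ^ j" \<theta>] Q0 by (intro mult_left_mono) auto
  also have "\<dots> \<le> real K ^ j / real ((K + 1) ^ j)"
    using Q0 by (simp add: divide_simps) (use mult_left_mono[of 1 "real Q0" "real K ^ j"] in simp)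
  also have "\<dots> = (real K / real (K + 1)) ^ j"
    by (simp add: power_divide)
  finally show False
    using j by simp
qed

lemma good_approximation_exists:
  assumes irr: "\<theta> \<notin> \<rat>" and K: "1 \<le> K"
  obtains r where "B < r" "real K * dist_int (real r * \<theta>) < 1"
    "\<And>k. 1 \<le> k \<Longrightarrow> k * (K + 1) < r \<Longrightarrow> real K * dist_int (real r * \<theta>) \<le> dist_int (real k * \<theta>)"
proof -
  define B' where "B' = max B 1"
  have pos: "0 < min_dist_int \<theta> B'"
    using min_dist_int_pos irr B'_def by simp
  define Q0 where "Q0 = nat \<lceil>1 / min_dist_int \<theta> B'\<rceil> + K + 1"
  have Q0: "1 \<le> Q0" "1 / min_dist_int \<theta> B' \<le> real Q0" "real K \<le> real Q0"
    unfolding Q0_def by linarith+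
  obtain Q where Q: "Q0 \<le> Q" "real K * min_dist_int \<theta> Q \<le> min_dist_int \<theta> (Q div (K + 1))"
    using min_dist_int_drops[OF irr K Q0(1)] .
  obtain r where r: "1 \<le> r" "r \<le> Q" "min_dist_int \<theta> Q = dist_int (real r * \<theta>)"
    using min_dist_int_attained Q Q0 by (metis order_trans)
  have small: "dist_int (real r * \<theta>) < 1 / real Q"
    using min_dist_int_less[of Q \<theta>] Q Q0 r by simp
  also have "\<dots> \<le> 1 / real Q0"
    using Q Q0 by (simp add: frac_le)
  also have "\<dots> \<le> min_dist_int \<theta> B'"
    using pos Q0 by (simp add: divide_simps mult.commute)
  finally have "B < r"
    using min_dist_int_le[of r B' \<theta>] r unfolding B'_def by force
  moreover have "real K * dist_int (real r * \<theta>) < 1"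
  proof -
    have "real K * dist_int (real r * \<theta>) < real K * (1 / real Q)"
      using small K by (intro mult_strict_left_mono) auto
    also have "\<dots> \<le> 1"
      using Q Q0 by (simp add: divide_simps)
    finally show ?thesis .
  qed
  moreover have "real K * dist_int (real r * \<theta>) \<le> dist_int (real k * \<theta>)"
    if "1 \<le> k" "k * (K + 1) < r" for k
  proof -
    have "k \<le> Q div (K + 1)"
      using that r by (simp add: less_eq_div_iff_mult_less_eq)
    then have "min_dist_int \<theta> (Q div (K + 1)) \<le> dist_int (real k * \<theta>)"
      using that by (intro min_dist_int_le) auto
    with Q r show ?thesis
      by simp
  qed
  ultimately show ?thesis
    using that by blast
qed

section \<open>Floors along arithmetic progressions\<close>

lemma frac_mult_add_in_interval:
  assumes irr: "\<theta> \<notin> \<rat>" and bounds: "0 \<le> lo" "lo < hi" "hi \<le> 1"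
  obtains m where "N \<le> m" "lo < frac (real m * \<theta> + \<alpha>)" "frac (real m * \<theta> + \<alpha>) < hi"
proof -
  define \<gamma> where "\<gamma> = (lo + hi) / 2"
  have "0 < (hi - lo) / 2"
    using bounds by simp
  then obtain h k where k: "0 < k" "\<bar>of_int k * \<theta> - of_int h - (\<gamma> - real N * \<theta> - \<alpha>)\<bar> < (hi - lo) / 2"
    using sequence_of_fractional_parts_is_dense[OF irr] by metis
  define y where "y = real (N + nat k) * \<theta> + \<alpha> - of_int h"
  define d where "d = of_int k * \<theta> - of_int h - (\<gamma> - real N * \<theta> - \<alpha>)"
  have "y = \<gamma> + d"
    using k(1) unfolding y_def d_def by (simp add: algebra_simps)
  moreover have "\<bar>d\<bar> < (hi - lo) / 2"
    using k(2) unfolding d_def .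
  ultimately have y: "lo < y \<and> y < hi"
    unfolding \<gamma>_def abs_less_iff by (simp add: field_simps)
  then have "\<lfloor>real (N + nat k) * \<theta> + \<alpha>\<rfloor> = h"
    using bounds unfolding y_def by (intro floor_unique) auto
  then have "frac (real (N + nat k) * \<theta> + \<alpha>) = y"
    unfolding frac_def y_def by simp
  with y show ?thesis
    by (intro that[of "N + nat k"]) auto
qed

lemma floor_add_mult_eq_0:
  fixes t \<epsilon> :: real
  assumes t: "0 \<le> t" "t < 1" and n: "\<lfloor>t + real n * \<epsilon>\<rfloor> = 0" and "i \<le> n"
  shows "\<lfloor>t + real i * \<epsilon>\<rfloor> = 0"
proof -
  have tn: "0 \<le> t + real n * \<epsilon>" "t + real n * \<epsilon> < 1"
    using n by linarith+
  show ?thesis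
  proof (cases "0 \<le> \<epsilon>")
    case True
    then have "0 \<le> real i * \<epsilon>" "real i * \<epsilon> \<le> real n * \<epsilon>"
      using \<open>i \<le> n\<close> by (auto intro: mult_right_mono)
    then show ?thesis
      using t tn by (intro floor_unique) auto
  next
    case False
    then have "real i * \<epsilon> \<le> 0" "real n * \<epsilon> \<le> real i * \<epsilon>"
      using \<open>i \<le> n\<close> by (auto intro: mult_right_mono_neg simp: mult_nonneg_nonpos)
    then show ?thesis
      using t tn by (intro floor_unique) auto
  qed
qed

lemma floor_add_mult_jump:
  fixes t \<epsilon> :: real
  assumes t: "0 \<le> t" "t < 1" and \<epsilon>: "\<epsilon> \<noteq> 0" "real n * \<bar>\<epsilon>\<bar> < 1"
    and jump: "\<lfloor>t + real n * \<epsilon>\<rfloor> \<noteq> 0"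
  obtains j where "1 \<le> j" "j \<le> n"
    "\<And>i. i \<le> n \<Longrightarrow> \<lfloor>t + real i * \<epsilon>\<rfloor> = (if j \<le> i then (if 0 < \<epsilon> then 1 else -1) else 0)"
proof -
  define j where "j = (LEAST i. \<lfloor>t + real i * \<epsilon>\<rfloor> \<noteq> 0)"
  have jn: "j \<le> n"
    unfolding j_def using jump by (rule Least_le)
  have jz: "\<lfloor>t + real j * \<epsilon>\<rfloor> \<noteq> 0"
    unfolding j_def using jump by (rule LeastI)
  have "1 \<le> j"
    using jz t by (cases j) (auto intro: floor_unique)
  moreover have "\<lfloor>t + real i * \<epsilon>\<rfloor> = 0" if "i < j" for i
    using that not_less_Least unfolding j_def by blast
  moreover have "\<lfloor>t + real i * \<epsilon>\<rfloor> = (if 0 < \<epsilon> then 1 else -1)" if "j \<le> i" "i \<le> n" for i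
  proof (cases "0 < \<epsilon>")
    case True
    have "real j * \<epsilon> \<le> real i * \<epsilon>" "real i * \<epsilon> \<le> real n * \<epsilon>"
      using that True by (auto intro: mult_right_mono)
    moreover have "1 \<le> t + real j * \<epsilon>"
      using jz t True by (auto simp: floor_eq_iff)
    moreover have "real n * \<epsilon> < 1"
      using \<epsilon> True by simp
    ultimately have "1 \<le> t + real i * \<epsilon>" "t + real i * \<epsilon> < 2"
      using t by linarith+
    then have "\<lfloor>t + real i * \<epsilon>\<rfloor> = 1"
      by (intro floor_unique) auto
    with True show ?thesis
      by simp
  next
    case False
    then have "\<epsilon> < 0"
      using \<epsilon> by simp
    then have "real i * \<epsilon> \<le> real j * \<epsilon>" "real n * \<epsilon> \<le> real i * \<epsilon>"
      using that by (auto intro: mult_right_mono_neg)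
    moreover have "t + real j * \<epsilon> < 0"
      using jz t mult_nonneg_nonpos[of "real j" \<epsilon>] \<open>\<epsilon> < 0\<close> by (auto simp: floor_eq_iff)
    moreover have "- 1 < real n * \<epsilon>"
      using \<epsilon> \<open>\<epsilon> < 0\<close> by simp
    ultimately have "- 1 \<le> t + real i * \<epsilon>" "t + real i * \<epsilon> < 0"
      using t by linarith+
    then have "\<lfloor>t + real i * \<epsilon>\<rfloor> = -1"
      by (intro floor_unique) auto
    with False show ?thesis
      by simp
  qed
  ultimately show ?thesis
    using jn by (intro that[of j]) auto
qed

lemma floor_jump_window:
  fixes \<epsilon> :: real
  assumes \<epsilon>: "\<epsilon> \<noteq> 0" "real n * \<bar>\<epsilon>\<bar> < 1" and n: "1 \<le> n"
  obtains lo hi where "0 \<le> lo" "lo < hi" "hi \<le> 1"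
    "\<And>t. lo < t \<Longrightarrow> t < hi \<Longrightarrow> \<lfloor>t + real (n - 1) * \<epsilon>\<rfloor> = 0"
    "\<And>t. lo < t \<Longrightarrow> t < hi \<Longrightarrow> \<lfloor>t + real n * \<epsilon>\<rfloor> = (if 0 < \<epsilon> then 1 else -1)"
proof -
  have n1: "real (n - 1) = real n - 1"
    using n by simp
  have "\<bar>\<epsilon>\<bar> \<le> real n * \<bar>\<epsilon>\<bar>"
    using n by (simp add: mult_le_cancel_right1)
  with \<epsilon> have small: "\<bar>\<epsilon>\<bar> < 1"
    by linarith
  show ?thesis
  proof (cases "0 < \<epsilon>")
    case True
    have "0 \<le> (real n - 1) * \<epsilon>" "real n * \<epsilon> < 1"
      using True n \<epsilon> by auto
    then show ?thesis
      using True small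
      by (intro that[of "1 - real n * \<epsilon>" "1 - (real n - 1) * \<epsilon>"]) (auto simp: n1 floor_eq_iff algebra_simps)
  next
    case False
    with \<epsilon> have "\<epsilon> < 0"
      by simp
    have "(real n - 1) * \<epsilon> \<le> 0" "- 1 < real n * \<epsilon>"
      using \<open>\<epsilon> < 0\<close> n \<epsilon> by (auto simp: mult_nonneg_nonpos)
    then show ?thesis
      using \<open>\<epsilon> < 0\<close> small
      by (intro that[of "- (real n - 1) * \<epsilon>" "- real n * \<epsilon>"]) (auto simp: n1 floor_eq_iff algebra_simps)
  qed
qed

lemma floor_neq_0_iff: "\<lfloor>x\<rfloor> \<noteq> 0 \<longleftrightarrow> x < 0 \<or> 1 \<le> x"
  by (metis floor_less_zero one_le_floor floor_eq_iff linorder_not_le of_int_0 add_0)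

lemma abs_diff_lt_if_floor_add_neq_0:
  fixes t t' \<delta> :: real
  assumes "0 \<le> t" "t < 1" "0 \<le> t'" "t' < 1" "\<lfloor>t + \<delta>\<rfloor> \<noteq> 0" "\<lfloor>t' + \<delta>\<rfloor> \<noteq> 0"
  shows "\<bar>t' - t\<bar> < \<bar>\<delta>\<bar>"
proof (cases "0 \<le> \<delta>")
  case True
  with assms have "1 \<le> t + \<delta>" "1 \<le> t' + \<delta>"
    unfolding floor_neq_0_iff by auto
  with assms(2,4) True show ?thesis
    by (simp add: abs_less_iff)
next
  case False
  with assms have "t + \<delta> < 0" "t' + \<delta> < 0"
    unfolding floor_neq_0_iff by auto
  with assms(1,3) False show ?thesis
    by (simp add: abs_less_iff)
qed

lemma floor_mult_add_shift:
  fixes \<theta> \<alpha> :: real and m i r :: nat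
  defines "p \<equiv> round (real r * \<theta>)"
  shows "\<lfloor>real (m + i * r) * \<theta> + \<alpha>\<rfloor>
    = \<lfloor>real m * \<theta> + \<alpha>\<rfloor> + int i * p + \<lfloor>frac (real m * \<theta> + \<alpha>) + real i * (real r * \<theta> - of_int p)\<rfloor>"
proof -
  have "real (m + i * r) * \<theta> + \<alpha>
      = (frac (real m * \<theta> + \<alpha>) + real i * (real r * \<theta> - of_int p)) + of_int (\<lfloor>real m * \<theta> + \<alpha>\<rfloor> + int i * p)"
    unfolding frac_def by (simp add: algebra_simps)
  then have "\<lfloor>real (m + i * r) * \<theta> + \<alpha>\<rfloor>
      = \<lfloor>frac (real m * \<theta> + \<alpha>) + real i * (real r * \<theta> - of_int p)\<rfloor> + (\<lfloor>real m * \<theta> + \<alpha>\<rfloor> + int i * p)"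
    by (simp only: floor_add_int)
  then show ?thesis
    by simp
qed

section \<open>Polynomials along a Beatty sequence\<close>

locale beatty_poly =
  fixes \<theta> \<alpha> :: real and f :: "int poly" and \<sigma> :: nat and r :: "nat \<Rightarrow> nat"
  assumes theta_pos: "0 < \<theta>" and theta_less_1: "\<theta> < 1" and theta_irrational: "\<theta> \<notin> \<rat>"
    and alpha_pos: "0 < \<alpha>"
    and degree_pos: "0 < degree f"
    and sigma_def: "\<sigma> = Suc (degree f)"
    and r_gt: "n < r n"
    and r_approx: "real \<sigma> * dist_int (real (r n) * \<theta>) < 1"
    and r_best: "\<And>k. 1 \<le> k \<Longrightarrow> k * (\<sigma> + 1) < r n \<Longrightarrow> real \<sigma> * dist_int (real (r n) * \<theta>) \<le> dist_int (real k * \<theta>)"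
begin

definition ipart :: "nat \<Rightarrow> int" where
  "ipart m = \<lfloor>real m * \<theta> + \<alpha>\<rfloor>"

definition fpart :: "nat \<Rightarrow> real" where
  "fpart m = frac (real m * \<theta> + \<alpha>)"

definition num :: "nat \<Rightarrow> int" where
  "num n = round (real (r n) * \<theta>)"

definition err :: "nat \<Rightarrow> real" where
  "err n = real (r n) * \<theta> - of_int (num n)"

definition jump :: "nat \<Rightarrow> int" where
  "jump n = (if 0 < err n then 1 else -1)"

definition shift_diff :: "int \<Rightarrow> int poly" where
  "shift_diff s = f \<circ>\<^sub>p [:s, 1:] - f"

abbreviation w :: "nat \<Rightarrow> nat \<Rightarrow> int" where
  "w \<equiv> wseq (\<lambda>m. poly f \<lfloor>real m * \<theta> + \<alpha>\<rfloor>) \<sigma> (fdiff_coeff \<sigma>) r"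

abbreviation \<Delta> :: "nat \<Rightarrow> nat set" where
  "\<Delta> \<equiv> Delta (\<lambda>m. poly f \<lfloor>real m * \<theta> + \<alpha>\<rfloor>) \<sigma> (fdiff_coeff \<sigma>) r"

lemma fpart_bounds: "0 \<le> fpart m" "fpart m < 1"
  unfolding fpart_def by (simp_all add: frac_lt_1)

lemma ipart_add_fpart: "of_int (ipart m) + fpart m = real m * \<theta> + \<alpha>"
  unfolding ipart_def fpart_def frac_def by simp

lemma ipart_nonneg: "0 \<le> ipart m"
  unfolding ipart_def using theta_pos alpha_pos by simp

lemma ipart_mono: "m \<le> m' \<Longrightarrow> ipart m \<le> ipart m'"
  unfolding ipart_def using theta_pos by (intro floor_mono add_right_mono mult_right_mono) auto

lemma ipart_diff_le: "m \<le> m' \<Longrightarrow> ipart m' - ipart m \<le> int (m' - m)"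
proof -
  assume "m \<le> m'"
  have "of_int (ipart m' - ipart m) < (real m' - real m) * \<theta> + 1"
    using ipart_add_fpart[of m] ipart_add_fpart[of m'] fpart_bounds[of m] fpart_bounds[of m']
    by (simp add: algebra_simps)
  also have "\<dots> \<le> real (m' - m) + 1"
    using \<open>m \<le> m'\<close> theta_less_1 theta_pos by (simp add: of_nat_diff mult_left_le)
  finally show ?thesis
    by linarith
qed

lemma ipart_eventually_gt: obtains N where "\<And>m. N \<le> m \<Longrightarrow> B < ipart m"
proof
  fix m
  assume "nat \<lceil>(\<bar>of_int B\<bar> + 1) / \<theta>\<rceil> \<le> m"
  then have "(\<bar>of_int B\<bar> + 1) / \<theta> \<le> real m"
    by linarith
  then have "of_int B + 1 \<le> real m * \<theta> + \<alpha>"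
    using theta_pos alpha_pos by (simp add: divide_le_eq)
  then show "B < ipart m"
    unfolding ipart_def by linarith
qed

lemma abs_err_eq: "\<bar>err n\<bar> = dist_int (real (r n) * \<theta>)"
  unfolding err_def num_def dist_int_def ..

lemma err_neq_0: "err n \<noteq> 0"
  using dist_int_mult_pos[OF theta_irrational, of "r n"] r_gt[of n] abs_err_eq[of n] by auto

lemma sigma_abs_err_less_1: "real \<sigma> * \<bar>err n\<bar> < 1"
  using r_approx abs_err_eq by simp

lemma num_nonneg: "0 \<le> num n"
  unfolding num_def using theta_pos by (simp add: round_def)

lemma num_le: "num n \<le> int (r n)"
proof -
  have "of_int (num n) \<le> real (r n) * \<theta> + 1 / 2"
    unfolding num_def by (rule of_int_round_le)
  also have "\<dots> < real (r n) + 1"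
    using mult_left_le[of \<theta> "real (r n)"] theta_less_1 by simp
  finally show ?thesis
    by linarith
qed

lemma shift_diff_neq_0: "s \<noteq> 0 \<Longrightarrow> shift_diff s \<noteq> 0"
  unfolding shift_diff_def using degree_pos by (rule pcompose_shift_diff_neq_0)

lemma degree_shift_diff_less: "degree (shift_diff s) < degree f"
  unfolding shift_diff_def using degree_pos by (rule degree_pcompose_shift_diff_less)

lemma w_eq: "w n m = (\<Sum>i=0..\<sigma>. fdiff_coeff \<sigma> i * poly f (ipart m + int i * num n + \<lfloor>fpart m + real i * err n\<rfloor>))"
  unfolding wseq_def floor_mult_add_shift ipart_def fpart_def num_def err_def ..

lemma w_eq_0:
  assumes "\<lfloor>fpart m + real \<sigma> * err n\<rfloor> = 0"
  shows "w n m = 0"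
proof -
  have "\<lfloor>fpart m + real i * err n\<rfloor> = 0" if "i \<le> \<sigma>" for i
    using floor_add_mult_eq_0[OF fpart_bounds assms that] .
  then have "w n m = (\<Sum>i=0..\<sigma>. fdiff_coeff \<sigma> i * poly f (ipart m + int i * num n))"
    unfolding w_eq by (intro sum.cong) auto
  also have "\<dots> = 0"
    using sigma_def by (intro sum_fdiff_coeff_poly_eq_0) simp
  finally show ?thesis .
qed

lemma w_eq_tail_sum:
  assumes "\<And>i. i \<le> \<sigma> \<Longrightarrow> \<lfloor>fpart m + real i * err n\<rfloor> = (if j \<le> i then jump n else 0)"
  shows "w n m = tail_sum (shift_diff (jump n)) (fdiff_coeff \<sigma>) \<sigma> j (ipart m) (num n)"
  unfolding w_eq shift_diff_def using sigma_def assms by (intro sum_fdiff_coeff_poly_step) auto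

lemma in_Delta_floor_neq_0: "m \<in> \<Delta> n \<Longrightarrow> \<lfloor>fpart m + real \<sigma> * err n\<rfloor> \<noteq> 0"
  using w_eq_0 unfolding Delta_def by blast

lemma in_Delta_tail_sum:
  assumes "m \<in> \<Delta> n"
  obtains j where "1 \<le> j" "j \<le> \<sigma>" "w n m = tail_sum (shift_diff (jump n)) (fdiff_coeff \<sigma>) \<sigma> j (ipart m) (num n)"
proof -
  obtain j where "1 \<le> j" "j \<le> \<sigma>"
    and "\<And>i. i \<le> \<sigma> \<Longrightarrow> \<lfloor>fpart m + real i * err n\<rfloor> = (if j \<le> i then jump n else 0)"
    using floor_add_mult_jump[OF fpart_bounds err_neq_0 sigma_abs_err_less_1 in_Delta_floor_neq_0[OF assms]]
    unfolding jump_def by metis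
  with w_eq_tail_sum that show ?thesis
    by blast
qed

lemma Delta_gap:
  assumes m: "m \<in> \<Delta> n" and m': "m' \<in> \<Delta> n" and "m < m'"
  shows "r n \<le> (m' - m) * (\<sigma> + 1)"
proof (rule ccontr)
  assume "\<not> ?thesis"
  then have best: "real \<sigma> * \<bar>err n\<bar> \<le> dist_int (real (m' - m) * \<theta>)"
    using r_best[of "m' - m" n] \<open>m < m'\<close> abs_err_eq by simp
  have "real (m' - m) * \<theta> - of_int (ipart m' - ipart m) = fpart m' - fpart m"
    using ipart_add_fpart[of m] ipart_add_fpart[of m'] \<open>m < m'\<close> by (simp add: of_nat_diff algebra_simps)
  then have "dist_int (real (m' - m) * \<theta>) \<le> \<bar>fpart m' - fpart m\<bar>"
    by (metis dist_int_le)
  also have "\<dots> < \<bar>real \<sigma> * err n\<bar>"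
    using abs_diff_lt_if_floor_add_neq_0[OF fpart_bounds fpart_bounds
        in_Delta_floor_neq_0[OF m] in_Delta_floor_neq_0[OF m']] .
  finally show False
    using best by (simp add: abs_mult)
qed

lemma Delta_separated:
  assumes "m \<in> \<Delta> n" "m' \<in> \<Delta> n" "m \<noteq> m'"
  shows "1 / real (\<sigma> + 1) * real (r n) \<le> \<bar>real m - real m'\<bar>"
proof -
  have "1 / real (\<sigma> + 1) * real (r n) \<le> real b - real a"
    if "a \<in> \<Delta> n" "b \<in> \<Delta> n" "a < b" for a b
  proof -
    have "real (r n) \<le> real ((b - a) * (\<sigma> + 1))"
      using Delta_gap[OF that] by linarith
    then show ?thesis
      using \<open>a < b\<close> by (simp add: of_nat_diff field_simps)
  qed
  with assms show ?thesis
    by (cases "m < m'") (fastforce, force)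
qed

lemma Delta_infinite: "infinite (\<Delta> n)"
proof -
  let ?e = "err n" and ?g = "shift_diff (jump n)"
  have "?g \<noteq> 0"
    by (rule shift_diff_neq_0) (simp add: jump_def)
  then have "bdd_above {z. poly ?g z = 0}"
    by (intro bdd_above_finite poly_roots_finite)
  then obtain B where roots: "\<And>z. poly ?g z = 0 \<Longrightarrow> z \<le> B"
    unfolding bdd_above_def by blast
  obtain N1 where large: "\<And>m. N1 \<le> m \<Longrightarrow> B < ipart m"
    using ipart_eventually_gt by blast
  have "1 \<le> \<sigma>"
    using sigma_def by simp
  then obtain lo hi where window: "0 \<le> lo" "lo < hi" "hi \<le> 1"
    and below: "\<And>t. lo < t \<Longrightarrow> t < hi \<Longrightarrow> \<lfloor>t + real (\<sigma> - 1) * ?e\<rfloor> = 0"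
    and top: "\<And>t. lo < t \<Longrightarrow> t < hi \<Longrightarrow> \<lfloor>t + real \<sigma> * ?e\<rfloor> = jump n"
    unfolding jump_def using floor_jump_window[OF err_neq_0 sigma_abs_err_less_1] by blast
  have "\<exists>m\<ge>N. m \<in> \<Delta> n" for N
  proof -
    obtain m where m: "max N N1 \<le> m" "lo < fpart m" "fpart m < hi"
      using frac_mult_add_in_interval[OF theta_irrational window] unfolding fpart_def by blast
    have "\<lfloor>fpart m + real i * ?e\<rfloor> = (if \<sigma> \<le> i then jump n else 0)" if "i \<le> \<sigma>" for i
    proof (cases "i = \<sigma>")
      case False
      with that have "i \<le> \<sigma> - 1"
        by simp
      with floor_add_mult_eq_0[OF fpart_bounds below[OF m(2,3)]] False that show ?thesis
        by simp
    qed (use top[OF m(2,3)] in simp)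
    then have "w n m = tail_sum ?g (fdiff_coeff \<sigma>) \<sigma> \<sigma> (ipart m) (num n)"
      by (rule w_eq_tail_sum)
    also have "\<dots> = poly ?g (ipart m + int \<sigma> * num n)"
      by (simp add: tail_sum_def)
    also have "\<dots> \<noteq> 0"
    proof -
      have "B < ipart m"
        using large m(1) by simp
      moreover have "0 \<le> int \<sigma> * num n"
        using num_nonneg[of n] by simp
      ultimately have "B < ipart m + int \<sigma> * num n"
        by linarith
      then show ?thesis
        by (meson roots not_le)
    qed
    finally show ?thesis
      using m(1) unfolding Delta_def by auto
  qed
  then show ?thesis
    by (simp add: infinite_nat_iff_unbounded_le)
qed

lemma shift_diff_variation:
  assumes "s \<noteq> 0" "0 \<le> E"
  obtains C where "0 < C"
    "\<And>j j' x x' p D. 1 \<le> j \<Longrightarrow> j \<le> \<sigma> \<Longrightarrow> 0 \<le> x \<Longrightarrow> x \<le> x' \<Longrightarrow> x' \<le> x + E * D \<Longrightarrow>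
       0 \<le> p \<Longrightarrow> p \<le> E * D \<Longrightarrow> 1 \<le> D \<Longrightarrow>
       \<bar>tail_sum (shift_diff s) (fdiff_coeff \<sigma>) \<sigma> j' x' p\<bar>
         \<le> C * (D ^ degree f + \<bar>tail_sum (shift_diff s) (fdiff_coeff \<sigma>) \<sigma> j x p\<bar>)"
proof -
  obtain C where C: "0 < C"
    "\<And>j j' x x' p D. (\<Sum>i=j..\<sigma>. fdiff_coeff \<sigma> i) \<noteq> 0 \<Longrightarrow> 0 \<le> x \<Longrightarrow> x \<le> x' \<Longrightarrow> x' \<le> x + E * D \<Longrightarrow>
       0 \<le> p \<Longrightarrow> p \<le> E * D \<Longrightarrow> 1 \<le> D \<Longrightarrow>
       \<bar>tail_sum (shift_diff s) (fdiff_coeff \<sigma>) \<sigma> j' x' p\<bar>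
         \<le> C * (D ^ degree (shift_diff s) + \<bar>tail_sum (shift_diff s) (fdiff_coeff \<sigma>) \<sigma> j x p\<bar>)"
    using tail_sum_variation[OF shift_diff_neq_0[OF assms(1)] assms(2), where b = "fdiff_coeff \<sigma>" and n = \<sigma>]
    by blast
  show ?thesis
  proof (rule that[OF C(1)])
    fix j j' :: nat and x x' p D :: int
    assume j: "1 \<le> j" "j \<le> \<sigma>" and hyps: "0 \<le> x" "x \<le> x'" "x' \<le> x + E * D" "0 \<le> p" "p \<le> E * D"
      and D: "1 \<le> D"
    have "\<bar>tail_sum (shift_diff s) (fdiff_coeff \<sigma>) \<sigma> j' x' p\<bar>
        \<le> C * (D ^ degree (shift_diff s) + \<bar>tail_sum (shift_diff s) (fdiff_coeff \<sigma>) \<sigma> j x p\<bar>)"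
      by (rule C(2)[OF sum_fdiff_coeff_from_neq_0[OF j] hyps D])
    also have "\<dots> \<le> C * (D ^ degree f + \<bar>tail_sum (shift_diff s) (fdiff_coeff \<sigma>) \<sigma> j x p\<bar>)"
      using C(1) D degree_shift_diff_less[of s] by (intro mult_left_mono add_right_mono power_increasing) auto
    finally show "\<bar>tail_sum (shift_diff s) (fdiff_coeff \<sigma>) \<sigma> j' x' p\<bar>
        \<le> C * (D ^ degree f + \<bar>tail_sum (shift_diff s) (fdiff_coeff \<sigma>) \<sigma> j x p\<bar>)" .
  qed
qed

lemma w_variation:
  obtains C where "0 < C"
    "\<And>n m m'. m \<in> \<Delta> n \<Longrightarrow> m' \<in> \<Delta> n \<Longrightarrow> m < m' \<Longrightarrow>
       \<bar>w n m'\<bar> \<le> C * (int (m' - m) ^ degree f + \<bar>w n m\<bar>)"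
proof -
  define E where "E = int \<sigma> + 2"
  have E: "0 \<le> E"
    unfolding E_def by simp
  obtain C1 where C1: "0 < C1"
    "\<And>j j' x x' p D. 1 \<le> j \<Longrightarrow> j \<le> \<sigma> \<Longrightarrow> 0 \<le> x \<Longrightarrow> x \<le> x' \<Longrightarrow> x' \<le> x + E * D \<Longrightarrow>
       0 \<le> p \<Longrightarrow> p \<le> E * D \<Longrightarrow> 1 \<le> D \<Longrightarrow>
       \<bar>tail_sum (shift_diff 1) (fdiff_coeff \<sigma>) \<sigma> j' x' p\<bar>
         \<le> C1 * (D ^ degree f + \<bar>tail_sum (shift_diff 1) (fdiff_coeff \<sigma>) \<sigma> j x p\<bar>)"
    using shift_diff_variation[OF _ E, of 1] by auto
  obtain C2 where C2: "0 < C2"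
    "\<And>j j' x x' p D. 1 \<le> j \<Longrightarrow> j \<le> \<sigma> \<Longrightarrow> 0 \<le> x \<Longrightarrow> x \<le> x' \<Longrightarrow> x' \<le> x + E * D \<Longrightarrow>
       0 \<le> p \<Longrightarrow> p \<le> E * D \<Longrightarrow> 1 \<le> D \<Longrightarrow>
       \<bar>tail_sum (shift_diff (-1)) (fdiff_coeff \<sigma>) \<sigma> j' x' p\<bar>
         \<le> C2 * (D ^ degree f + \<bar>tail_sum (shift_diff (-1)) (fdiff_coeff \<sigma>) \<sigma> j x p\<bar>)"
    using shift_diff_variation[OF _ E, of "-1"] by auto
  show ?thesis
  proof (rule that[of "max C1 C2"])
    fix n m m'
    assume m: "m \<in> \<Delta> n" and m': "m' \<in> \<Delta> n" and "m < m'"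
    obtain j where j: "1 \<le> j" "j \<le> \<sigma>"
      and wm: "w n m = tail_sum (shift_diff (jump n)) (fdiff_coeff \<sigma>) \<sigma> j (ipart m) (num n)"
      using in_Delta_tail_sum[OF m] by blast
    obtain j' where wm': "w n m' = tail_sum (shift_diff (jump n)) (fdiff_coeff \<sigma>) \<sigma> j' (ipart m') (num n)"
      using in_Delta_tail_sum[OF m'] by blast
    define D where "D = int (m' - m)"
    have D: "1 \<le> D"
      unfolding D_def using \<open>m < m'\<close> by simp
    have DE: "D \<le> E * D"
      using mult_right_mono[of 1 E D] D unfolding E_def by simp
    have "ipart m' - ipart m \<le> D"
      unfolding D_def using \<open>m < m'\<close> by (intro ipart_diff_le) simp
    with DE have "ipart m' \<le> ipart m + E * D"
      by linarith
    moreover have "num n \<le> E * D"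
    proof -
      have "int (r n) \<le> int ((m' - m) * (\<sigma> + 1))"
        using Delta_gap[OF m m' \<open>m < m'\<close>] by linarith
      also have "\<dots> = D * (int \<sigma> + 1)"
        unfolding D_def by (simp only: of_nat_mult of_nat_add of_nat_1)
      also have "\<dots> \<le> E * D"
        using D unfolding E_def by (simp add: algebra_simps)
      finally show ?thesis
        using num_le[of n] by linarith
    qed
    moreover have "ipart m \<le> ipart m'"
      using \<open>m < m'\<close> by (intro ipart_mono) simp
    ultimately have hyps: "0 \<le> ipart m" "ipart m \<le> ipart m'" "ipart m' \<le> ipart m + E * D"
      "0 \<le> num n" "num n \<le> E * D"
      using ipart_nonneg num_nonneg by auto
    let ?X = "D ^ degree f + \<bar>w n m\<bar>"
    have "\<bar>w n m'\<bar> \<le> C1 * ?X \<or> \<bar>w n m'\<bar> \<le> C2 * ?X"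
      using C1(2)[OF j hyps D, of j'] C2(2)[OF j hyps D, of j'] unfolding wm wm' jump_def
      by (cases "0 < err n") simp_all
    moreover have "C1 * ?X \<le> max C1 C2 * ?X" "C2 * ?X \<le> max C1 C2 * ?X"
      using D by (simp_all add: mult_right_mono)
    ultimately show "\<bar>w n m'\<bar> \<le> max C1 C2 * (int (m' - m) ^ degree f + \<bar>w n m\<bar>)"
      unfolding D_def by linarith
  qed (use C1 in simp)
qed

lemma condition_star: "condition_star (\<lambda>m. poly f \<lfloor>real m * \<theta> + \<alpha>\<rfloor>)"
proof -
  obtain C where C: "0 < C"
    "\<And>n m m'. m \<in> \<Delta> n \<Longrightarrow> m' \<in> \<Delta> n \<Longrightarrow> m < m' \<Longrightarrow>
       \<bar>w n m'\<bar> \<le> C * (int (m' - m) ^ degree f + \<bar>w n m\<bar>)"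
    using w_variation by blast
  have "real_of_int \<bar>w n m'\<bar> \<le> real_of_int C * (real (m' - m) powr real (degree f) + real_of_int \<bar>w n m\<bar>)"
    if "m \<in> \<Delta> n" "m' \<in> \<Delta> n" "m < m'" for n m m'
  proof -
    have "real_of_int \<bar>w n m'\<bar> \<le> real_of_int (C * (int (m' - m) ^ degree f + \<bar>w n m\<bar>))"
      using C(2)[OF that] by linarith
    then show ?thesis
      using that(3) by (simp add: powr_realpow)
  qed
  moreover have "0 < r n" for n
    using r_gt[of n] by simp
  moreover have "\<not> bdd_above (range r)"
    using r_gt by (metis bdd_above.E rangeI not_less order_trans less_imp_le)
  ultimately show ?thesis
    unfolding condition_star_def using Delta_infinite Delta_separated C(1)
    by (intro exI[of _ \<sigma>] exI[of _ "fdiff_coeff \<sigma>"] exI[of _ r] conjI exI[of _ "1 / real (\<sigma> + 1)"]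
        exI[of _ "real (degree f)"] exI[of _ "real_of_int C"]) auto
qed

end

theorem mainTheorem2:
  fixes \<theta> \<alpha> :: real and f :: "int poly"
  assumes "0 < \<theta>" "\<theta> < 1" "\<theta> \<notin> \<rat>"
    and "0 < \<alpha>" "\<alpha> < 1"
    and "degree f > 0"
  shows "condition_star (\<lambda>m. poly f \<lfloor>real m * \<theta> + \<alpha>\<rfloor>)"
proof -
  let ?\<sigma> = "Suc (degree f)"
  have "\<exists>r. n < r \<and> real ?\<sigma> * dist_int (real r * \<theta>) < 1 \<and>
      (\<forall>k. 1 \<le> k \<longrightarrow> k * (?\<sigma> + 1) < r \<longrightarrow> real ?\<sigma> * dist_int (real r * \<theta>) \<le> dist_int (real k * \<theta>))" for n
    by (rule good_approximation_exists[OF assms(3), of ?\<sigma> n]) auto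
  then obtain r where "\<And>n. n < r n" "\<And>n. real ?\<sigma> * dist_int (real (r n) * \<theta>) < 1"
    "\<And>n k. 1 \<le> k \<Longrightarrow> k * (?\<sigma> + 1) < r n \<Longrightarrow> real ?\<sigma> * dist_int (real (r n) * \<theta>) \<le> dist_int (real k * \<theta>)"
    by metis
  then interpret beatty_poly \<theta> \<alpha> f ?\<sigma> r
    using assms by unfold_locales auto
  show ?thesis
    by (rule condition_star)
qed

end
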